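(* Let $\mathcal{M}=(F,+,\cdot,0,1,\dots)$ be a pseudofinite field with possibly extra structure, and let $\pmb{\delta}_F$ be the coarse pseudofinite dimension normalised by $|F|$. Suppose that for every formula $\varphi(x,y)$ with $|x|=1$ and every $b\in F^{|y|}$, $\pmb{\delta}_F(\varphi(x,b))\in\{0,1\}$. Then $\pmb{\delta}_F$ is definable, and for every formula $\psi(x,y)$ and every $c\in F^{|y|}$, $\pmb{\delta}_F(\psi(x,c))\in\{0,\dots,|x|\}$.
   Context: $\mathcal{M}$ is an infinite ultraproduct of finite structures whose reduct to the ring language is a field. For internal $D=\prod D_i/\mathcal{U}$, $|D|=(|D_i|)/\mathcal{U}\in\mathbb{R}^*$; for definable $A$, $\pmb{\delta}_F(A)=\mathrm{st}(\log|A|/\log|F|)$. $\pmb{\delta}_F$ is definable if (i) for every parameter-free $\phi(x,y)$ and reals $r_1<r_2$ there is a $\emptyset$-definable $D$ with $\{a:\pmb{\delta}_F(\phi(x,a))\le r_1\}\subseteq D\subseteq\{a:\pmb{\delta}_F(\phi(x,a))<r_2\}$, and (ii) $\{\pmb{\delta}_F(\phi(x,a)):a\}$ is finite for every parameter-free $\phi(x,y)$. *)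

theory Defs
  imports Complex_Main "HOL-Library.Extended_Real" "HOL-Algebra.Ring"
begin

datatype 'f fsym = Add | Mul | Zero | One | FExtra 'f

fun fsym_arity :: "('f \<Rightarrow> nat) \<Rightarrow> 'f fsym \<Rightarrow> nat" where
  "fsym_arity arf Add = 2"
| "fsym_arity arf Mul = 2"
| "fsym_arity arf Zero = 0"
| "fsym_arity arf One = 0"
| "fsym_arity arf (FExtra f) = arf f"

datatype 'f tm = Var nat | Fn "'f fsym" "'f tm list"

datatype ('f, 'r) fm =
    Eq "'f tm" "'f tm"
  | Rel 'r "'f tm list"
  | Neg "('f, 'r) fm"
  | Conj "('f, 'r) fm" "('f, 'r) fm"
  | Ex nat "('f, 'r) fm"

fun wf_tm :: "('f \<Rightarrow> nat) \<Rightarrow> 'f tm \<Rightarrow> bool" where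
  "wf_tm arf (Var v) = True"
| "wf_tm arf (Fn f ts) = (length ts = fsym_arity arf f \<and> (\<forall>t\<in>set ts. wf_tm arf t))"

fun wf_fm :: "('f \<Rightarrow> nat) \<Rightarrow> ('r \<Rightarrow> nat) \<Rightarrow> ('f, 'r) fm \<Rightarrow> bool" where
  "wf_fm arf arr (Eq s t) = (wf_tm arf s \<and> wf_tm arf t)"
| "wf_fm arf arr (Rel r ts) = (length ts = arr r \<and> (\<forall>t\<in>set ts. wf_tm arf t))"
| "wf_fm arf arr (Neg p) = wf_fm arf arr p"
| "wf_fm arf arr (Conj p q) = (wf_fm arf arr p \<and> wf_fm arf arr q)"
| "wf_fm arf arr (Ex v p) = wf_fm arf arr p"

fun fv_tm :: "'f tm \<Rightarrow> nat set" where
  "fv_tm (Var v) = {v}"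
| "fv_tm (Fn f ts) = (\<Union>t\<in>set ts. fv_tm t)"

fun fv :: "('f, 'r) fm \<Rightarrow> nat set" where
  "fv (Eq s t) = fv_tm s \<union> fv_tm t"
| "fv (Rel r ts) = (\<Union>t\<in>set ts. fv_tm t)"
| "fv (Neg p) = fv p"
| "fv (Conj p q) = fv p \<union> fv q"
| "fv (Ex v p) = fv p - {v}"

record ('a, 'f, 'r) struct =
  univ :: "'a set"
  fint :: "'f fsym \<Rightarrow> 'a list \<Rightarrow> 'a"
  rint :: "'r \<Rightarrow> 'a list \<Rightarrow> bool"

definition wf_struct :: "('f \<Rightarrow> nat) \<Rightarrow> ('a, 'f, 'r) struct \<Rightarrow> bool" where
  "wf_struct arf S \<longleftrightarrow> univ S \<noteq> {} \<and>
     (\<forall>f as. length as = fsym_arity arf f \<and> set as \<subseteq> univ S \<longrightarrow> fint S f as \<in> univ S)"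

fun eval_tm :: "('a, 'f, 'r) struct \<Rightarrow> (nat \<Rightarrow> 'a) \<Rightarrow> 'f tm \<Rightarrow> 'a" where
  "eval_tm S e (Var v) = e v"
| "eval_tm S e (Fn f ts) = fint S f (map (eval_tm S e) ts)"

fun sat :: "('a, 'f, 'r) struct \<Rightarrow> (nat \<Rightarrow> 'a) \<Rightarrow> ('f, 'r) fm \<Rightarrow> bool" where
  "sat S e (Eq s t) = (eval_tm S e s = eval_tm S e t)"
| "sat S e (Rel r ts) = rint S r (map (eval_tm S e) ts)"
| "sat S e (Neg p) = (\<not> sat S e p)"
| "sat S e (Conj p q) = (sat S e p \<and> sat S e q)"
| "sat S e (Ex v p) = (\<exists>a\<in>univ S. sat S (e(v := a)) p)"

definition asg :: "'a list \<Rightarrow> nat \<Rightarrow> 'a" where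
  "asg xs v = xs ! v"

definition ring_reduct :: "('a, 'f, 'r) struct \<Rightarrow> 'a ring" where
  "ring_reduct S = \<lparr>carrier = univ S, monoid.mult = (\<lambda>a b. fint S Mul [a, b]),
      one = fint S One [], zero = fint S Zero [], add = (\<lambda>a b. fint S Add [a, b])\<rparr>"

text \<open>A formula phi(x,y) with |x| = n, |y| = m: its free variables are among 0..n+m-1,
  the first n being x and the next m being y.  Its realisations in S with parameters bs:\<close>
definition realis :: "('a, 'f, 'r) struct \<Rightarrow> ('f, 'r) fm \<Rightarrow> nat \<Rightarrow> 'a list \<Rightarrow> 'a list set" where
  "realis S phi n bs = {xs. length xs = n \<and> set xs \<subseteq> univ S \<and> sat S (asg (xs @ bs)) phi}"

definition is_fm :: "('f \<Rightarrow> nat) \<Rightarrow> ('r \<Rightarrow> nat) \<Rightarrow> nat \<Rightarrow> ('f, 'r) fm \<Rightarrow> bool" where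
  "is_fm arf arr k phi \<longleftrightarrow> wf_fm arf arr phi \<and> fv phi \<subseteq> {..<k}"

definition ultrafilter :: "'i filter \<Rightarrow> bool" where
  "ultrafilter U \<longleftrightarrow> U \<noteq> bot \<and> (\<forall>P. eventually P U \<or> eventually (\<lambda>i. \<not> P i) U)"

text \<open>An m-tuple of the ultraproduct M = prod M_i / U, represented by a family b of
  m-tuples of the factors (almost everywhere).\<close>
definition up_tuple :: "'i filter \<Rightarrow> ('i \<Rightarrow> ('a, 'f, 'r) struct) \<Rightarrow> nat \<Rightarrow> ('i \<Rightarrow> 'a list) \<Rightarrow> bool" where
  "up_tuple U M m b \<longleftrightarrow> eventually (\<lambda>i. length (b i) = m \<and> set (b i) \<subseteq> univ (M i)) U"

text \<open>Satisfaction in the ultraproduct (Los): M |= chi(b) iff U-almost all M_i |= chi(b_i).\<close>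
definition up_sat :: "'i filter \<Rightarrow> ('i \<Rightarrow> ('a, 'f, 'r) struct) \<Rightarrow> ('f, 'r) fm \<Rightarrow> ('i \<Rightarrow> 'a list) \<Rightarrow> bool" where
  "up_sat U M chi b \<longleftrightarrow> eventually (\<lambda>i. sat (M i) (asg (b i)) chi) U"

text \<open>The definable set phi(M, b) = prod phi(M_i, b_i) / U is internal; it is nonempty iff
  U-almost all factors are nonempty.  Its coarse dimension normalised by |F|:
  delta(phi(x,b)) = st(log|phi(M,b)| / log|F|), computed as the U-limit of the
  standard ratios; delta of the empty set is -infinity.\<close>
definition up_nonempty :: "'i filter \<Rightarrow> ('i \<Rightarrow> ('a, 'f, 'r) struct) \<Rightarrow> ('f, 'r) fm \<Rightarrow> nat \<Rightarrow> ('i \<Rightarrow> 'a list) \<Rightarrow> bool" where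
  "up_nonempty U M phi n b \<longleftrightarrow> eventually (\<lambda>i. realis (M i) phi n (b i) \<noteq> {}) U"

definition delta :: "'i filter \<Rightarrow> ('i \<Rightarrow> ('a, 'f, 'r) struct) \<Rightarrow> ('f, 'r) fm \<Rightarrow> nat \<Rightarrow> ('i \<Rightarrow> 'a list) \<Rightarrow> ereal" where
  "delta U M phi n b =
     (if up_nonempty U M phi n b
      then ereal (Lim U (\<lambda>i. ln (real (card (realis (M i) phi n (b i)))) / ln (real (card (univ (M i))))))
      else -\<infinity>)"

text \<open>Definability of delta, clauses (i) and (ii) of the context.  phi(x,y) is a
  parameter-free formula with |x| = n, |y| = m; the 0-definable set D of m-tuples is
  given by a parameter-free formula chi(y) with free variables among 0..m-1.\<close>
definition delta_definable :: "('f \<Rightarrow> nat) \<Rightarrow> ('r \<Rightarrow> nat) \<Rightarrow> 'i filter \<Rightarrow> ('i \<Rightarrow> ('a, 'f, 'r) struct) \<Rightarrow> bool" where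
  "delta_definable arf arr U M \<longleftrightarrow>
     (\<forall>n m phi. is_fm arf arr (n + m) phi \<longrightarrow>
        (\<forall>r1 r2 :: real. r1 < r2 \<longrightarrow>
           (\<exists>chi. is_fm arf arr m chi \<and>
              (\<forall>b. up_tuple U M m b \<longrightarrow>
                   (delta U M phi n b \<le> ereal r1 \<longrightarrow> up_sat U M chi b) \<and>
                   (up_sat U M chi b \<longrightarrow> delta U M phi n b < ereal r2)))) \<and>
        finite {delta U M phi n b | b. up_tuple U M m b})"

end

(*
  Induction on the number n + 1 of free variables of a definable set X, viewed as the union of its
  unary fibres X_x over the projection of X to the last n coordinates.

  In a finite field F, call a set A small if (a, c) |-> a + w c is injective on A x A for some w.
  A small set has |A|^2 <= |F|. Conversely, a collision a1 + w b1 = a2 + w b2 between distinct pairs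
  determines w, so if no w works then every element of F is one of at most |A|^4 such values and
  |F| <= |A|^4. Smallness of a fibre is first-order, and by hypothesis every unary fibre has dimension
  0 or 1, so along the ultrafilter small fibres have dimension 0 and the others dimension 1.

  This splits the projection of X definably into the part over small fibres and the part over the
  others. Over each part, |X| is squeezed between |part| times a fibre of minimal and of maximal size;
  choosing such fibres as parameters, both have the same dimension, so
      delta(X) = max (delta(small part), delta(big part) + 1).
  By induction delta takes values in {-oo, 0, ..., n + 1}, and since the recursion is carried out by
  formulas, {b. delta(X_b) <= r} is definable for every r.
*)
theory Submission
  imports Defs
begin

section \<open>Renaming variables\<close>

fun rename_tm :: "(nat \<Rightarrow> nat) \<Rightarrow> 'f tm \<Rightarrow> 'f tm" where
  "rename_tm \<rho> (Var v) = Var (\<rho> v)"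
| "rename_tm \<rho> (Fn f ts) = Fn f (map (rename_tm \<rho>) ts)"

fun rename :: "(nat \<Rightarrow> nat) \<Rightarrow> ('f, 'r) fm \<Rightarrow> ('f, 'r) fm" where
  "rename \<rho> (Eq s t) = Eq (rename_tm \<rho> s) (rename_tm \<rho> t)"
| "rename \<rho> (Rel r ts) = Rel r (map (rename_tm \<rho>) ts)"
| "rename \<rho> (Neg p) = Neg (rename \<rho> p)"
| "rename \<rho> (Conj p q) = Conj (rename \<rho> p) (rename \<rho> q)"
| "rename \<rho> (Ex v p) = Ex (\<rho> v) (rename \<rho> p)"

lemma eval_rename_tm: "eval_tm S e (rename_tm \<rho> t) = eval_tm S (e \<circ> \<rho>) t"
  by (induction t) (auto intro!: arg_cong[where f = "fint S _"])

lemma sat_rename: "inj \<rho> \<Longrightarrow> sat S e (rename \<rho> p) = sat S (e \<circ> \<rho>) p"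
proof (induction p arbitrary: e)
  case (Ex v p)
  have "(e(\<rho> v := a)) \<circ> \<rho> = (e \<circ> \<rho>)(v := a)" for a
    using Ex.prems by (auto simp: fun_eq_iff inj_eq)
  then show ?case using Ex.IH[OF Ex.prems] by (simp only: rename.simps sat.simps)
qed (simp_all add: eval_rename_tm comp_def)

lemma wf_rename_tm: "wf_tm arf (rename_tm \<rho> t) = wf_tm arf t"
  by (induction t) auto

lemma wf_rename: "wf_fm arf arr (rename \<rho> p) = wf_fm arf arr p"
  by (induction p) (auto simp: wf_rename_tm)

lemma fv_rename_tm: "fv_tm (rename_tm \<rho> t) = \<rho> ` fv_tm t"
  by (induction t) auto

lemma fv_rename: "inj \<rho> \<Longrightarrow> fv (rename \<rho> p) = \<rho> ` fv p"
  by (induction p) (auto simp: fv_rename_tm inj_eq)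

lemma eval_tm_cong: "(\<And>v. v \<in> fv_tm t \<Longrightarrow> e v = e' v) \<Longrightarrow> eval_tm S e t = eval_tm S e' t"
proof (induction t)
  case (Fn f ts)
  then have "map (eval_tm S e) ts = map (eval_tm S e') ts" by (auto intro!: map_cong)
  then show ?case by (simp only: eval_tm.simps)
qed simp

lemma sat_cong: "(\<And>v. v \<in> fv p \<Longrightarrow> e v = e' v) \<Longrightarrow> sat S e p = sat S e' p"
proof (induction p arbitrary: e e')
  case (Eq s t) then show ?case using eval_tm_cong[of s e e' S] eval_tm_cong[of t e e' S] by auto
next
  case (Rel r ts)
  have "map (eval_tm S e) ts = map (eval_tm S e') ts"
    by (rule map_cong[OF refl], rule eval_tm_cong) (use Rel in auto)
  then show ?case by (simp only: sat.simps)
next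
  case (Ex v p)
  have "\<And>a. sat S (e(v := a)) p = sat S (e'(v := a)) p"
    by (rule Ex.IH) (use Ex.prems in auto)
  then show ?case by (simp only: sat.simps)
next
  case (Neg p)
  have "sat S e p = sat S e' p" by (rule Neg.IH) (use Neg.prems in simp)
  then show ?case by simp
next
  case (Conj p q)
  have "sat S e p = sat S e' p" by (rule Conj.IH(1)) (use Conj.prems in simp)
  moreover have "sat S e q = sat S e' q" by (rule Conj.IH(2)) (use Conj.prems in simp)
  ultimately show ?case by simp
qed

(* Sends variable 0 to v and 1, ..., N to 0, ..., N - 1; swapping v with N keeps it injective. *)
definition head_to :: "nat \<Rightarrow> nat \<Rightarrow> nat \<Rightarrow> nat" where
  "head_to N v k = (if k = 0 then v else if k \<le> N then k - 1 else if k = v then N else k)"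

lemma inj_head_to: "N \<le> v \<Longrightarrow> inj (head_to N v)"
  unfolding inj_def head_to_def by auto

lemma fv_rename_head_to:
  "N \<le> v \<Longrightarrow> fv p \<subseteq> {..N} \<Longrightarrow> fv (rename (head_to N v) p) \<subseteq> {..<N} \<union> {v}"
  using fv_rename[OF inj_head_to, of N v p] by (auto simp: head_to_def)

lemma sat_rename_head_to:
  assumes "N \<le> v" "fv p \<subseteq> {..N}" "length z = N" "e v = a" "\<And>j. j < N \<Longrightarrow> e j = z ! j"
  shows "sat S e (rename (head_to N v) p) = sat S (asg (a # z)) p"
proof -
  have "sat S e (rename (head_to N v) p) = sat S (e \<circ> head_to N v) p"
    using assms(1) by (simp add: sat_rename inj_head_to)
  also have "\<dots> = sat S (asg (a # z)) p"
  proof (rule sat_cong)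
    fix k assume "k \<in> fv p"
    then have "k \<le> N" using assms(2) by auto
    then show "(e \<circ> head_to N v) k = asg (a # z) k"
      using assms by (cases k) (simp_all add: head_to_def asg_def)
  qed
  finally show ?thesis .
qed

definition ex_head :: "nat \<Rightarrow> ('f, 'r) fm \<Rightarrow> ('f, 'r) fm" where
  "ex_head N p = Ex N (rename (head_to N N) p)"

lemma sat_ex_head:
  assumes "fv p \<subseteq> {..N}" "length z = N"
  shows "sat S (asg z) (ex_head N p) = (\<exists>a\<in>univ S. sat S (asg (a # z)) p)"
  unfolding ex_head_def using sat_rename_head_to[OF order_refl assms] by (simp add: asg_def)

lemma is_fm_ex_head: "is_fm arf arr (Suc N) p \<Longrightarrow> is_fm arf arr N (ex_head N p)"
  unfolding is_fm_def ex_head_def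
  using fv_rename_head_to[of N N p] by (auto simp: wf_rename lessThan_Suc_atMost)

definition restrict_fm :: "('f, 'r) fm \<Rightarrow> ('f, 'r) fm \<Rightarrow> ('f, 'r) fm" where
  "restrict_fm p q = Conj p (rename Suc q)"

lemma sat_restrict_fm:
  "sat S (asg (a # z)) (restrict_fm p q) = (sat S (asg (a # z)) p \<and> sat S (asg z) q)"
proof -
  have "asg (a # z) \<circ> Suc = asg z" by (auto simp: fun_eq_iff asg_def)
  then show ?thesis by (simp add: restrict_fm_def sat_rename)
qed

lemma is_fm_restrict_fm:
  "is_fm arf arr (Suc N) p \<Longrightarrow> is_fm arf arr N q \<Longrightarrow> is_fm arf arr (Suc N) (restrict_fm p q)"
  by (auto simp: is_fm_def restrict_fm_def wf_rename fv_rename)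

section \<open>Injectivity of (a, c) \<mapsto> a + w c on A \<times> A\<close>

definition scaled_sum_inj :: "('a, 'm) ring_scheme \<Rightarrow> 'a \<Rightarrow> 'a set \<Rightarrow> bool" where
  "scaled_sum_inj R w A \<longleftrightarrow> inj_on (\<lambda>(a, c). a \<oplus>\<^bsub>R\<^esub> w \<otimes>\<^bsub>R\<^esub> c) (A \<times> A)"

lemma card_sq_le_if_scaled_sum_inj:
  fixes R (structure)
  assumes "ring R" "finite (carrier R)" "A \<subseteq> carrier R" "w \<in> carrier R" "scaled_sum_inj R w A"
  shows "card A ^ 2 \<le> card (carrier R)"
proof -
  interpret ring R by fact
  have "(\<lambda>(a, c). a \<oplus> w \<otimes> c) ` (A \<times> A) \<subseteq> carrier R"
    using assms(3,4) by auto
  then have "card (A \<times> A) \<le> card (carrier R)"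
    using assms(2,5) by (intro card_inj_on_le) (auto simp: scaled_sum_inj_def)
  then show ?thesis by (simp add: card_cartesian_product power2_eq_square)
qed

lemma collision_determines_scalar:
  fixes R (structure)
  assumes "domain R"
    and "a1 \<in> carrier R" "b1 \<in> carrier R" "a2 \<in> carrier R" "b2 \<in> carrier R"
    and "w \<in> carrier R" "w' \<in> carrier R" "(a1, b1) \<noteq> (a2, b2)"
    and "a1 \<oplus> w \<otimes> b1 = a2 \<oplus> w \<otimes> b2" "a1 \<oplus> w' \<otimes> b1 = a2 \<oplus> w' \<otimes> b2"
  shows "w = w'"
proof -
  interpret domain R by fact
  have "b1 \<noteq> b2"
  proof
    assume "b1 = b2"
    have "a1 = (a1 \<oplus> w \<otimes> b1) \<ominus> w \<otimes> b1" "a2 = (a2 \<oplus> w \<otimes> b1) \<ominus> w \<otimes> b1"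
      using assms(2-6) by algebra+
    then show False using \<open>b1 = b2\<close> assms(8,9) by simp
  qed
  have "(w \<ominus> w') \<otimes> (b1 \<ominus> b2) =
      ((a1 \<oplus> w \<otimes> b1) \<ominus> (a2 \<oplus> w \<otimes> b2)) \<ominus> ((a1 \<oplus> w' \<otimes> b1) \<ominus> (a2 \<oplus> w' \<otimes> b2))"
    using assms(2-7) by algebra
  also have "\<dots> = ((a2 \<oplus> w \<otimes> b2) \<ominus> (a2 \<oplus> w \<otimes> b2)) \<ominus> ((a2 \<oplus> w' \<otimes> b2) \<ominus> (a2 \<oplus> w' \<otimes> b2))"
    by (simp only: assms(9,10))
  also have "\<dots> = \<zero>"
    using assms(4-7) by algebra
  finally have "w \<ominus> w' = \<zero> \<or> b1 \<ominus> b2 = \<zero>"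
    using assms(3,5-7) integral by blast
  moreover have "b1 = (b1 \<ominus> b2) \<oplus> b2" "w = (w \<ominus> w') \<oplus> w'"
    using assms(3,5-7) by algebra+
  ultimately show ?thesis using \<open>b1 \<noteq> b2\<close> assms(5,7) by auto
qed

lemma exists_scaled_sum_inj:
  assumes "domain R" "finite (carrier R)" "A \<subseteq> carrier R" "card A ^ 4 < card (carrier R)"
  shows "\<exists>w\<in>carrier R. scaled_sum_inj R w A"
proof (rule ccontr)
  assume none: "\<not> ?thesis"
  let ?f = "\<lambda>w (a, c). a \<oplus>\<^bsub>R\<^esub> w \<otimes>\<^bsub>R\<^esub> c"
  let ?Q = "(A \<times> A) \<times> (A \<times> A)"
  have "\<forall>w\<in>carrier R. \<exists>q. q \<in> ?Q \<and> fst q \<noteq> snd q \<and> ?f w (fst q) = ?f w (snd q)"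
  proof
    fix w assume "w \<in> carrier R"
    with none obtain x y where "x \<in> A \<times> A" "y \<in> A \<times> A" "x \<noteq> y" "?f w x = ?f w y"
      unfolding scaled_sum_inj_def inj_on_def by blast
    then show "\<exists>q. q \<in> ?Q \<and> fst q \<noteq> snd q \<and> ?f w (fst q) = ?f w (snd q)"
      by (intro exI[of _ "(x, y)"]) simp
  qed
  from bchoice[OF this] obtain q where q: "\<forall>w\<in>carrier R. q w \<in> ?Q \<and> fst (q w) \<noteq> snd (q w) \<and>
      ?f w (fst (q w)) = ?f w (snd (q w))"
    by blast
  have "inj_on q (carrier R)"
  proof (rule inj_onI)
    fix w w' assume w: "w \<in> carrier R" "w' \<in> carrier R" and eq: "q w = q w'"
    obtain a1 b1 a2 b2 where qw: "q w = ((a1, b1), (a2, b2))" by (metis prod.exhaust)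
    have "q w \<in> ?Q \<and> fst (q w) \<noteq> snd (q w) \<and> ?f w (fst (q w)) = ?f w (snd (q w))"
      "?f w' (fst (q w')) = ?f w' (snd (q w'))"
      using q w by blast+
    then have "a1 \<in> A" "b1 \<in> A" "a2 \<in> A" "b2 \<in> A" "(a1, b1) \<noteq> (a2, b2)"
        "a1 \<oplus>\<^bsub>R\<^esub> w \<otimes>\<^bsub>R\<^esub> b1 = a2 \<oplus>\<^bsub>R\<^esub> w \<otimes>\<^bsub>R\<^esub> b2"
        "a1 \<oplus>\<^bsub>R\<^esub> w' \<otimes>\<^bsub>R\<^esub> b1 = a2 \<oplus>\<^bsub>R\<^esub> w' \<otimes>\<^bsub>R\<^esub> b2"
      unfolding eq[symmetric] qw by simp_all
    then show "w = w'"
      using collision_determines_scalar[OF assms(1) _ _ _ _ w] assms(3) by blast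
  qed
  then have "card (carrier R) \<le> card ?Q"
    using q finite_subset[OF assms(3,2)] by (intro card_inj_on_le) auto
  also have "\<dots> = card A ^ 4"
    by (simp add: card_cartesian_product eval_nat_numeral)
  finally show False using assms(4) by simp
qed

section \<open>Fibres and the smallness formula\<close>

definition fibre :: "('a, 'f, 'r) struct \<Rightarrow> ('f, 'r) fm \<Rightarrow> 'a list \<Rightarrow> 'a set" where
  "fibre S p z = {a \<in> univ S. sat S (asg (a # z)) p}"

lemma finite_fibre: "finite (univ S) \<Longrightarrow> finite (fibre S p z)"
  by (simp add: fibre_def)

lemma fibre_restrict_fm:
  "fibre S (restrict_fm p q) z = (if sat S (asg z) q then fibre S p z else {})"
  by (auto simp: fibre_def sat_restrict_fm)

definition small_fibre :: "('a, 'f, 'r) struct \<Rightarrow> ('f, 'r) fm \<Rightarrow> 'a list \<Rightarrow> bool" where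
  "small_fibre S p z \<longleftrightarrow> (\<exists>w\<in>univ S. scaled_sum_inj (ring_reduct S) w (fibre S p z))"

(* Variables N, ..., N + 4 hold w, a1, b1, a2, b2; the parameters of the fibre occupy 0, ..., N - 1. *)
definition collision_fm :: "nat \<Rightarrow> ('f, 'r) fm \<Rightarrow> ('f, 'r) fm" where
  "collision_fm N p =
     Conj (rename (head_to N (N + 1)) p) (Conj (rename (head_to N (N + 2)) p)
     (Conj (rename (head_to N (N + 3)) p) (Conj (rename (head_to N (N + 4)) p)
     (Conj (Eq (Fn Add [Var (N + 1), Fn Mul [Var N, Var (N + 2)]])
               (Fn Add [Var (N + 3), Fn Mul [Var N, Var (N + 4)]]))
       (Neg (Conj (Eq (Var (N + 1)) (Var (N + 3))) (Eq (Var (N + 2)) (Var (N + 4)))))))))"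

definition small_fm :: "nat \<Rightarrow> ('f, 'r) fm \<Rightarrow> ('f, 'r) fm" where
  "small_fm N p = Ex N (Neg (Ex (N + 1) (Ex (N + 2) (Ex (N + 3) (Ex (N + 4) (collision_fm N p))))))"

lemma sat_collision_fm:
  assumes "fv p \<subseteq> {..N}" "length z = N"
  shows "sat S ((asg z)(N := w, N + 1 := a1, N + 2 := b1, N + 3 := a2, N + 4 := b2)) (collision_fm N p) \<longleftrightarrow>
    sat S (asg (a1 # z)) p \<and> sat S (asg (b1 # z)) p \<and> sat S (asg (a2 # z)) p \<and> sat S (asg (b2 # z)) p \<and>
    fint S Add [a1, fint S Mul [w, b1]] = fint S Add [a2, fint S Mul [w, b2]] \<and> (a1, b1) \<noteq> (a2, b2)"
proof -
  let ?e = "(asg z)(N := w, N + 1 := a1, N + 2 := b1, N + 3 := a2, N + 4 := b2)"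
  have "sat S ?e (rename (head_to N (N + k)) p) = sat S (asg (?e (N + k) # z)) p" if "0 < k" for k
    by (rule sat_rename_head_to) (use assms that in \<open>auto simp: asg_def\<close>)
  from this[of 1] this[of 2] this[of 3] this[of 4] show ?thesis
    unfolding collision_fm_def by simp
qed

lemma sat_small_fm:
  assumes "fv p \<subseteq> {..N}" "length z = N"
  shows "sat S (asg z) (small_fm N p) = small_fibre S p z"
proof -
  have "scaled_sum_inj (ring_reduct S) w (fibre S p z) \<longleftrightarrow>
     \<not> (\<exists>a1\<in>univ S. \<exists>b1\<in>univ S. \<exists>a2\<in>univ S. \<exists>b2\<in>univ S.
       sat S (asg (a1 # z)) p \<and> sat S (asg (b1 # z)) p \<and> sat S (asg (a2 # z)) p \<and> sat S (asg (b2 # z)) p \<and>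
       fint S Add [a1, fint S Mul [w, b1]] = fint S Add [a2, fint S Mul [w, b2]] \<and> (a1, b1) \<noteq> (a2, b2))" for w
    unfolding scaled_sum_inj_def inj_on_def fibre_def by (fastforce simp: ring_reduct_def)
  then show ?thesis
    unfolding small_fm_def small_fibre_def sat.simps sat_collision_fm[OF assms] by blast
qed

lemma is_fm_small_fm: "is_fm arf arr (Suc N) p \<Longrightarrow> is_fm arf arr N (small_fm N p)"
proof -
  assume p: "is_fm arf arr (Suc N) p"
  then have "fv (rename (head_to N (N + k)) p) \<subseteq> {..<N + 5}" if "k < 5" for k
    using fv_rename_head_to[of N "N + k" p] that by (auto simp: is_fm_def lessThan_Suc_atMost)
  from this[of 1] this[of 2] this[of 3] this[of 4] have "fv (collision_fm N p) \<subseteq> {..<N + 5}"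
    unfolding collision_fm_def by simp
  then show ?thesis
    using p by (auto simp: is_fm_def small_fm_def collision_fm_def wf_rename)
qed

definition small_part :: "nat \<Rightarrow> ('f, 'r) fm \<Rightarrow> ('f, 'r) fm" where
  "small_part N p = restrict_fm p (small_fm N p)"

definition big_part :: "nat \<Rightarrow> ('f, 'r) fm \<Rightarrow> ('f, 'r) fm" where
  "big_part N p = restrict_fm p (Neg (small_fm N p))"

lemma is_fm_small_part: "is_fm arf arr (Suc N) p \<Longrightarrow> is_fm arf arr (Suc N) (small_part N p)"
  by (simp add: small_part_def is_fm_restrict_fm is_fm_small_fm)

lemma is_fm_big_part: "is_fm arf arr (Suc N) p \<Longrightarrow> is_fm arf arr (Suc N) (big_part N p)"
  using is_fm_restrict_fm[of arf arr N p "Neg (small_fm N p)"] is_fm_small_fm[of arf arr N p]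
  by (simp add: big_part_def is_fm_def)

section \<open>Counting realisations\<close>

lemma finite_realis: "finite (univ S) \<Longrightarrow> finite (realis S p n b)"
  by (rule finite_subset[OF _ finite_lists_length_eq[of "univ S" n]]) (auto simp: realis_def)

lemma realis_zero: "realis S p 0 b = (if sat S (asg b) p then {[]} else {})"
  by (auto simp: realis_def)

lemma card_realis_one: "card (realis S p 1 z) = card (fibre S p z)"
proof -
  have "realis S p 1 z = (\<lambda>a. [a]) ` fibre S p z"
    by (auto simp: realis_def fibre_def length_Suc_conv)
  then show ?thesis by (simp add: card_image inj_on_def)
qed

lemma realis_ex_head:
  assumes "fv p \<subseteq> {..n + m}" "length b = m"
  shows "realis S (ex_head (n + m) p) n b =
    {x. length x = n \<and> set x \<subseteq> univ S \<and> fibre S p (x @ b) \<noteq> {}}"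
  using sat_ex_head[of p "n + m" "_ @ b" S] assms by (auto simp: realis_def fibre_def)

lemma card_realis_Suc:
  assumes "finite (univ S)" "fv p \<subseteq> {..n + m}" "length b = m"
  shows "card (realis S p (Suc n) b) =
    (\<Sum>x\<in>realis S (ex_head (n + m) p) n b. card (fibre S p (x @ b)))"
proof -
  let ?P = "realis S (ex_head (n + m) p) n b"
  have "realis S p (Suc n) b = (\<lambda>(x, a). a # x) ` (SIGMA x:?P. fibre S p (x @ b))"
    unfolding realis_ex_head[OF assms(2,3)]
    by (auto simp: realis_def fibre_def length_Suc_conv image_iff)
  moreover have "inj_on (\<lambda>(x, a). a # x) (SIGMA x:?P. fibre S p (x @ b))"
    by (auto simp: inj_on_def)
  moreover have "finite ?P" "\<forall>x\<in>?P. finite (fibre S p (x @ b))"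
    using assms(1) finite_realis by (auto simp: fibre_def)
  ultimately show ?thesis by (simp add: card_image card_SigmaI)
qed

lemma card_realis_small_big:
  assumes "finite (univ S)"
  shows "card (realis S p n b) = card (realis S (small_part N p) n b) + card (realis S (big_part N p) n b)"
proof -
  have "realis S p n b = realis S (small_part N p) n b \<union> realis S (big_part N p) n b"
    "realis S (small_part N p) n b \<inter> realis S (big_part N p) n b = {}"
    by (auto simp: realis_def small_part_def big_part_def restrict_fm_def)
  then show ?thesis using assms finite_realis by (metis card_Un_disjoint)
qed

lemma up_tuple_append:
  assumes "up_tuple U M m b" "eventually (\<lambda>i. c i \<in> realis (M i) q n (b i)) U"
  shows "up_tuple U M (n + m) (\<lambda>i. c i @ b i)"
  using assms unfolding up_tuple_def realis_def by eventually_elim auto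

lemma card_fibre_small_part:
  assumes "field (ring_reduct S)" "finite (univ S)" "fv p \<subseteq> {..N}" "length z = N"
  shows "card (fibre S (small_part N p) z) ^ 2 \<le> card (univ S)"
proof (cases "small_fibre S p z")
  case True
  then obtain w where "w \<in> univ S" "scaled_sum_inj (ring_reduct S) w (fibre S p z)"
    by (auto simp: small_fibre_def)
  then have "card (fibre S p z) ^ 2 \<le> card (univ S)"
    using card_sq_le_if_scaled_sum_inj[OF field.is_ring[OF assms(1)]] assms(2)
    by (auto simp: ring_reduct_def fibre_def)
  then show ?thesis using True by (simp add: small_part_def fibre_restrict_fm sat_small_fm[OF assms(3,4)])
qed (simp add: small_part_def fibre_restrict_fm sat_small_fm[OF assms(3,4)])

lemma card_fibre_big_part:
  assumes "field (ring_reduct S)" "finite (univ S)" "fv p \<subseteq> {..N}" "length z = N"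
    and "fibre S (big_part N p) z \<noteq> {}"
  shows "card (univ S) \<le> card (fibre S (big_part N p) z) ^ 4"
proof -
  have fibre: "fibre S (big_part N p) z = fibre S p z" "\<not> small_fibre S p z"
    using assms(5) by (auto simp: big_part_def fibre_restrict_fm sat_small_fm[OF assms(3,4)] split: if_splits)
  show ?thesis
  proof (rule ccontr)
    assume "\<not> ?thesis"
    then have "\<exists>w\<in>univ S. scaled_sum_inj (ring_reduct S) w (fibre S p z)"
      using exists_scaled_sum_inj[OF field.axioms(1)[OF assms(1)]] assms(2) fibre(1)
      by (auto simp: ring_reduct_def fibre_def)
    then show False using fibre(2) by (simp add: small_fibre_def)
  qed
qed

section \<open>Dimensions along an ultrafilter\<close>

lemma ultrafilter_eventually_not:
  assumes "ultrafilter U"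
  shows "eventually (\<lambda>i. \<not> P i) U \<longleftrightarrow> \<not> eventually P U"
proof
  assume "eventually (\<lambda>i. \<not> P i) U"
  moreover have "U \<noteq> bot" using assms by (simp add: ultrafilter_def)
  ultimately show "\<not> eventually P U"
    using eventually_conj eventually_False by fastforce
qed (use assms in \<open>auto simp: ultrafilter_def\<close>)

lemma ultrafilter_tendsto_Lim:
  fixes f :: "'i \<Rightarrow> real"
  assumes u: "ultrafilter U" and b: "eventually (\<lambda>i. a \<le> f i \<and> f i \<le> c) U"
  shows "(f \<longlongrightarrow> Lim U f) U"
proof -
  have nb: "U \<noteq> bot" using u by (simp add: ultrafilter_def)
  define S where "S = {t. eventually (\<lambda>i. t \<le> f i) U}"
  have "eventually (\<lambda>i. a \<le> f i) U" by (rule eventually_mono[OF b]) auto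
  then have aS: "a \<in> S" unfolding S_def by simp
  have ub: "t \<le> c" if "t \<in> S" for t
  proof (rule ccontr)
    assume "\<not> t \<le> c"
    have "eventually (\<lambda>i. t \<le> f i) U" using that by (simp add: S_def)
    with b have "eventually (\<lambda>i. False) U" by (rule eventually_elim2) (use \<open>\<not> t \<le> c\<close> in auto)
    then show False using nb by simp
  qed
  have bdd: "bdd_above S" using ub by (auto simp: bdd_above_def)
  define L where "L = Sup S"
  have fL: "(f \<longlongrightarrow> L) U"
  proof (rule order_tendstoI)
    fix y assume "y < L"
    then obtain t where t: "t \<in> S" "y < t" using less_cSup_iff[of S y] aS bdd by (auto simp: L_def)
    then show "eventually (\<lambda>i. y < f i) U"
      by (rule_tac eventually_mono[of "\<lambda>i. t \<le> f i"]) (auto simp: S_def)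
  next
    fix y assume "L < y"
    define t where "t = (L + y) / 2"
    have "t \<notin> S"
    proof
      assume "t \<in> S" then have "t \<le> L" unfolding L_def using bdd by (rule cSup_upper)
      then show False using \<open>L < y\<close> by (simp add: t_def)
    qed
    then have "eventually (\<lambda>i. \<not> t \<le> f i) U" using u by (auto simp: S_def ultrafilter_def)
    then show "eventually (\<lambda>i. f i < y) U"
      by (rule eventually_mono) (use \<open>L < y\<close> in \<open>auto simp: t_def\<close>)
  qed
  have "Lim U f = L" using tendsto_Lim[OF nb fL] .
  then show ?thesis using fL by simp
qed

lemma tendsto_ln_div_mult_sandwich:
  fixes L P X s t :: "'i \<Rightarrow> real"
  assumes ev: "eventually (\<lambda>i. 0 < L i \<and> 0 < P i \<and> 0 < s i \<and> P i * s i \<le> X i \<and> X i \<le> P i * t i) F"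
    and P: "((\<lambda>i. ln (P i) / L i) \<longlongrightarrow> k) F"
    and s: "((\<lambda>i. ln (s i) / L i) \<longlongrightarrow> d) F"
    and t: "((\<lambda>i. ln (t i) / L i) \<longlongrightarrow> d) F"
  shows "((\<lambda>i. ln (X i) / L i) \<longlongrightarrow> k + d) F"
proof (rule tendsto_sandwich)
  show "eventually (\<lambda>i. ln (P i) / L i + ln (s i) / L i \<le> ln (X i) / L i) F"
  proof (rule eventually_mono[OF ev])
    fix i assume h: "0 < L i \<and> 0 < P i \<and> 0 < s i \<and> P i * s i \<le> X i \<and> X i \<le> P i * t i"
    then have "ln (P i) + ln (s i) = ln (P i * s i)"
      by (simp add: ln_mult)
    also have "\<dots> \<le> ln (X i)"
      using h by (intro ln_mono) auto
    finally have "ln (P i) + ln (s i) \<le> ln (X i)" .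
    then show "ln (P i) / L i + ln (s i) / L i \<le> ln (X i) / L i"
      using h by (simp add: add_divide_distrib[symmetric] divide_right_mono)
  qed
  show "eventually (\<lambda>i. ln (X i) / L i \<le> ln (P i) / L i + ln (t i) / L i) F"
  proof (rule eventually_mono[OF ev])
    fix i assume h: "0 < L i \<and> 0 < P i \<and> 0 < s i \<and> P i * s i \<le> X i \<and> X i \<le> P i * t i"
    then have "0 < X i"
      by (metis less_le_trans mult_pos_pos)
    then have "0 < t i"
      using h by (metis less_le_trans zero_less_mult_pos)
    with h \<open>0 < X i\<close> have "ln (X i) \<le> ln (P i * t i)"
      by (intro ln_mono) auto
    also have "\<dots> = ln (P i) + ln (t i)"
      using h \<open>0 < t i\<close> by (simp add: ln_mult)
    finally have "ln (X i) \<le> ln (P i) + ln (t i)" .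
    then show "ln (X i) / L i \<le> ln (P i) / L i + ln (t i) / L i"
      using h by (simp add: add_divide_distrib[symmetric] divide_right_mono)
  qed
qed (use tendsto_add[OF P s] tendsto_add[OF P t] in auto)

lemma tendsto_ln_div_add:
  fixes L A B :: "'i \<Rightarrow> real"
  assumes L: "filterlim L at_top F" and pos: "eventually (\<lambda>i. 0 < A i \<and> 0 < B i) F"
    and A: "((\<lambda>i. ln (A i) / L i) \<longlongrightarrow> a) F" and B: "((\<lambda>i. ln (B i) / L i) \<longlongrightarrow> b) F"
  shows "((\<lambda>i. ln (A i + B i) / L i) \<longlongrightarrow> max a b) F"
proof (rule tendsto_sandwich)
  have ev: "eventually (\<lambda>i. 0 < L i \<and> 0 < A i \<and> 0 < B i) F"
    using pos L by (simp add: filterlim_at_top_dense eventually_conj_iff)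
  show "eventually (\<lambda>i. max (ln (A i) / L i) (ln (B i) / L i) \<le> ln (A i + B i) / L i) F"
    by (rule eventually_mono[OF ev]) (auto simp: divide_right_mono)
  show "eventually (\<lambda>i. ln (A i + B i) / L i \<le> max (ln (A i) / L i) (ln (B i) / L i) + ln 2 / L i) F"
  proof (rule eventually_mono[OF ev])
    fix i assume h: "0 < L i \<and> 0 < A i \<and> 0 < B i"
    have "A i + B i \<le> 2 * max (A i) (B i)" by simp
    then have "ln (A i + B i) \<le> ln (2 * max (A i) (B i))" using h by simp
    also have "\<dots> = max (ln (A i)) (ln (B i)) + ln 2" using h by (simp add: ln_mult max_def)
    finally have "ln (A i + B i) / L i \<le> (max (ln (A i)) (ln (B i)) + ln 2) / L i"
      using h by (simp add: divide_right_mono)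
    then show "ln (A i + B i) / L i \<le> max (ln (A i) / L i) (ln (B i) / L i) + ln 2 / L i"
      using h by (simp add: add_divide_distrib max_divide_distrib_right)
  qed
  show "((\<lambda>i. max (ln (A i) / L i) (ln (B i) / L i) + ln 2 / L i) \<longlongrightarrow> max a b) F"
    using tendsto_add[OF tendsto_max[OF A B]
        tendsto_divide_0[OF tendsto_const filterlim_at_top_imp_at_infinity[OF L]]] by simp
qed (rule tendsto_max[OF A B])

definition dim_values :: "nat \<Rightarrow> ereal set" where
  "dim_values n = insert (-\<infinity>) ((\<lambda>k. ereal (real k)) ` {..n})"

lemma max_in_dim_values_Suc:
  assumes "a \<in> dim_values n" "b \<in> dim_values n"
  shows "max a (b + 1) \<in> dim_values (Suc n)"
proof -
  have "b + 1 \<in> dim_values (Suc n)"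
    using assms(2) unfolding dim_values_def
  proof (elim insertE imageE)
    fix j assume "b = ereal (real j)" "j \<in> {..n}"
    then show "b + 1 \<in> insert (-\<infinity>) ((\<lambda>k. ereal (real k)) ` {..Suc n})"
      by (intro insertI2 image_eqI[of _ _ "Suc j"]) auto
  qed simp
  moreover have "a \<in> dim_values (Suc n)"
    using assms(1) by (auto simp: dim_values_def)
  ultimately show ?thesis by (simp add: max_def)
qed

locale ultra_dim =
  fixes U :: "'i filter" and L :: "'i \<Rightarrow> real"
  assumes ultrafilter: "ultrafilter U" and L_at_top: "filterlim L at_top U"
begin

definition has_dim :: "('i \<Rightarrow> nat) \<Rightarrow> ereal \<Rightarrow> bool" where
  "has_dim s d \<longleftrightarrow>
     (if eventually (\<lambda>i. 0 < s i) U
      then \<exists>k. d = ereal k \<and> ((\<lambda>i. ln (real (s i)) / L i) \<longlongrightarrow> k) U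
      else d = -\<infinity>)"

lemma U_not_bot: "U \<noteq> bot"
  using ultrafilter by (simp add: ultrafilter_def)

lemma eventually_L_pos: "eventually (\<lambda>i. 0 < L i) U"
  using L_at_top by (simp add: filterlim_at_top_dense)

lemma has_dim_ereal_iff:
  "has_dim s (ereal k) \<longleftrightarrow>
     eventually (\<lambda>i. 0 < s i) U \<and> ((\<lambda>i. ln (real (s i)) / L i) \<longlongrightarrow> k) U"
  by (simp add: has_dim_def)

lemma eventually_zero_iff: "eventually (\<lambda>i. s i = 0) U \<longleftrightarrow> \<not> eventually (\<lambda>i. 0 < (s i :: nat)) U"
  using ultrafilter_eventually_not[OF ultrafilter, of "\<lambda>i. 0 < s i"] by simp

lemma has_dim_MInfty_iff: "has_dim s (-\<infinity>) \<longleftrightarrow> eventually (\<lambda>i. s i = 0) U"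
  by (simp add: has_dim_def eventually_zero_iff)

lemma has_dimE:
  assumes "has_dim s d"
  obtains "d = -\<infinity>" "eventually (\<lambda>i. s i = 0) U"
    | k where "d = ereal k" "eventually (\<lambda>i. 0 < s i) U" "((\<lambda>i. ln (real (s i)) / L i) \<longlongrightarrow> k) U"
  using assms has_dim_MInfty_iff by (cases d) (auto simp: has_dim_def split: if_splits)

lemma has_dim_cong:
  assumes "eventually (\<lambda>i. s i = t i) U" "has_dim s d"
  shows "has_dim t d"
  using assms(2)
proof (cases rule: has_dimE)
  case 1
  then show ?thesis using assms(1) by (auto simp: has_dim_MInfty_iff elim: eventually_elim2)
next
  case (2 k)
  have "eventually (\<lambda>i. 0 < t i \<and> ln (real (s i)) / L i = ln (real (t i)) / L i) U"
    using assms(1) 2(2) by eventually_elim simp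
  then show ?thesis
    using 2 tendsto_cong[of "\<lambda>i. ln (real (s i)) / L i" "\<lambda>i. ln (real (t i)) / L i"]
    by (auto simp: has_dim_ereal_iff eventually_conj_iff)
qed

lemma has_dim_add:
  assumes s: "has_dim s a" and t: "has_dim t b"
  shows "has_dim (\<lambda>i. s i + t i) (max a b)"
  using s
proof (cases rule: has_dimE)
  case 1
  have "eventually (\<lambda>i. t i = s i + t i) U" using 1(2) by eventually_elim simp
  from has_dim_cong[OF this t] show ?thesis using 1(1) by simp
next
  case (2 ka)
  from t show ?thesis
  proof (cases rule: has_dimE)
    case 1
    have "eventually (\<lambda>i. s i = s i + t i) U" using 1(2) by eventually_elim simp
    from has_dim_cong[OF this s] show ?thesis using 1(1) by simp
  next
    case (2 kb)
    have "((\<lambda>i. ln (real (s i) + real (t i)) / L i) \<longlongrightarrow> max ka kb) U"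
      using 2 \<open>eventually (\<lambda>i. 0 < s i) U\<close> \<open>((\<lambda>i. ln (real (s i)) / L i) \<longlongrightarrow> ka) U\<close>
      by (intro tendsto_ln_div_add[OF L_at_top]) (auto elim: eventually_elim2)
    then have "has_dim (\<lambda>i. s i + t i) (ereal (max ka kb))"
      unfolding has_dim_ereal_iff using 2(2) by (auto elim: eventually_mono)
    then show ?thesis using \<open>a = ereal ka\<close> 2(1) by simp
  qed
qed

lemma has_dim_sum:
  fixes P :: "'i \<Rightarrow> 'b set" and f :: "'i \<Rightarrow> 'b \<Rightarrow> nat"
  assumes ev: "eventually (\<lambda>i. finite (P i) \<and> (\<forall>x\<in>P i. 0 < f i x) \<and> s i = (\<Sum>x\<in>P i. f i x)) U"
    and P: "has_dim (\<lambda>i. card (P i)) dP"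
    and f: "\<And>c. eventually (\<lambda>i. c i \<in> P i) U \<Longrightarrow> has_dim (\<lambda>i. f i (c i)) (ereal d)"
  shows "has_dim s (dP + ereal d)"
  using P
proof (cases rule: has_dimE)
  case 1
  have "eventually (\<lambda>i. s i = 0) U"
    using ev 1(2) by eventually_elim simp
  then show ?thesis using 1(1) by (simp add: has_dim_MInfty_iff)
next
  case (2 k)
  define cmin where "cmin i = arg_min_on (f i) (P i)" for i
  define cmax where "cmax i = arg_max_on (f i) (P i)" for i
  have extremal: "cmin i \<in> P i \<and> cmax i \<in> P i \<and> (\<forall>x\<in>P i. f i (cmin i) \<le> f i x \<and> f i x \<le> f i (cmax i))"
    if fin: "finite (P i)" and pos: "0 < card (P i)" for i
  proof -
    obtain x where x: "x \<in> P i" using pos by (auto simp: card_gt_0_iff)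
    then have ne: "P i \<noteq> {}" by auto
    have "\<forall>y. y \<in> P i \<longrightarrow> f i y < Suc (Max (f i ` P i))"
      using fin by (auto intro: le_imp_less_Suc Max_ge)
    then show ?thesis
      using arg_max_nat_lemma[of "\<lambda>x. x \<in> P i" x "f i"] arg_min_if_finite(1)[OF fin ne]
        arg_min_least[OF fin ne] x
      by (auto simp: cmin_def cmax_def arg_max_on_def)
  qed
  have good: "eventually (\<lambda>i. finite (P i) \<and> (\<forall>x\<in>P i. 0 < f i x) \<and> s i = (\<Sum>x\<in>P i. f i x) \<and>
      0 < card (P i) \<and> 0 < L i) U"
    using ev 2(2) eventually_L_pos by eventually_elim blast
  have in_P: "eventually (\<lambda>i. cmin i \<in> P i) U" "eventually (\<lambda>i. cmax i \<in> P i) U"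
    using good by (eventually_elim, simp add: extremal)+
  have min: "((\<lambda>i. ln (real (f i (cmin i))) / L i) \<longlongrightarrow> d) U"
    using f[OF in_P(1)] by (simp add: has_dim_ereal_iff)
  have max: "((\<lambda>i. ln (real (f i (cmax i))) / L i) \<longlongrightarrow> d) U"
    using f[OF in_P(2)] by (simp add: has_dim_ereal_iff)
  have nat_bounds: "eventually (\<lambda>i. 0 < L i \<and> 0 < card (P i) \<and> 0 < f i (cmin i) \<and>
      card (P i) * f i (cmin i) \<le> s i \<and> s i \<le> card (P i) * f i (cmax i)) U"
    using good
  proof eventually_elim
    case (elim i)
    with extremal[of i] have "card (P i) * f i (cmin i) \<le> (\<Sum>x\<in>P i. f i x)"
      "(\<Sum>x\<in>P i. f i x) \<le> card (P i) * f i (cmax i)"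
      using sum_bounded_below[of "P i" "f i (cmin i)" "f i"] sum_bounded_above[of "P i" "f i" "f i (cmax i)"]
      by auto
    with elim extremal[of i] show ?case by simp
  qed
  then have "eventually (\<lambda>i. 0 < L i \<and> 0 < real (card (P i)) \<and> 0 < real (f i (cmin i)) \<and>
      real (card (P i)) * real (f i (cmin i)) \<le> real (s i) \<and>
      real (s i) \<le> real (card (P i)) * real (f i (cmax i))) U"
    by eventually_elim (simp flip: of_nat_mult)
  from tendsto_ln_div_mult_sandwich[OF this 2(3) min max]
  have "((\<lambda>i. ln (real (s i)) / L i) \<longlongrightarrow> k + d) U" .
  moreover have "eventually (\<lambda>i. 0 < s i) U"
    using nat_bounds by eventually_elim (metis nat_0_less_mult_iff order_less_le_trans)
  ultimately show ?thesis using 2(1) by (simp add: has_dim_ereal_iff)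
qed

end

section \<open>Pseudofinite fields whose unary definable sets have dimension 0 or 1\<close>

locale unary_dim_0_1 =
  fixes arf :: "'f \<Rightarrow> nat" and arr :: "'r \<Rightarrow> nat"
    and U :: "'i filter" and M :: "'i \<Rightarrow> ('a, 'f, 'r) struct"
  assumes ultra: "ultrafilter U"
    and fin: "\<And>i. finite (univ (M i))"
    and infinite: "\<And>k::nat. eventually (\<lambda>i. card (univ (M i)) > k) U"
    and is_field: "eventually (\<lambda>i. field (ring_reduct (M i))) U"
    and hyp: "\<And>m phi b. is_fm arf arr (1 + m) phi \<Longrightarrow> up_tuple U M m b \<Longrightarrow>
               up_nonempty U M phi 1 b \<Longrightarrow> delta U M phi 1 b \<in> {0, 1}"

sublocale unary_dim_0_1 \<subseteq> ultra_dim U "\<lambda>i. ln (real (card (univ (M i))))"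
proof
  have "filterlim (\<lambda>i. real (card (univ (M i)))) at_top U"
    unfolding filterlim_at_top
  proof
    fix z :: real
    show "eventually (\<lambda>i. z \<le> real (card (univ (M i)))) U"
      using infinite[of "nat \<lceil>z\<rceil>"] by eventually_elim linarith
  qed
  then show "filterlim (\<lambda>i. ln (real (card (univ (M i))))) at_top U"
    by (rule filterlim_compose[OF ln_at_top])
qed (rule ultra)

context unary_dim_0_1
begin

abbreviation realis_sizes :: "('f, 'r) fm \<Rightarrow> nat \<Rightarrow> ('i \<Rightarrow> 'a list) \<Rightarrow> 'i \<Rightarrow> nat" where
  "realis_sizes p n b \<equiv> \<lambda>i. card (realis (M i) p n (b i))"

lemma delta_eqI:
  assumes "has_dim (realis_sizes p n b) d"
  shows "delta U M p n b = d"
proof -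
  have nonempty: "up_nonempty U M p n b \<longleftrightarrow> eventually (\<lambda>i. 0 < realis_sizes p n b i) U"
    by (simp add: up_nonempty_def card_gt_0_iff finite_realis[OF fin])
  from assms show ?thesis
  proof (cases rule: has_dimE)
    case 1
    then have "\<not> up_nonempty U M p n b"
      unfolding nonempty eventually_zero_iff[symmetric] by simp
    then show ?thesis using 1(1) by (simp add: delta_def)
  next
    case (2 k)
    then show ?thesis
      using nonempty tendsto_Lim[OF U_not_bot] by (simp add: delta_def)
  qed
qed

lemma has_dim_realis_zero:
  "has_dim (realis_sizes p 0 b) (if up_sat U M p b then 0 else -\<infinity>)"
proof (cases "up_sat U M p b")
  case True
  then have "eventually (\<lambda>i. realis_sizes p 0 b i = 1) U"
    by (simp add: up_sat_def realis_zero)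
  then have "eventually (\<lambda>i. 0 < realis_sizes p 0 b i) U"
    "eventually (\<lambda>i. ln (real (realis_sizes p 0 b i)) / ln (real (card (univ (M i)))) = 0) U"
    by (auto elim: eventually_mono)
  then have "eventually (\<lambda>i. 0 < realis_sizes p 0 b i) U"
    "((\<lambda>i. ln (real (realis_sizes p 0 b i)) / ln (real (card (univ (M i))))) \<longlongrightarrow> 0) U"
    by (auto intro: tendsto_eventually)
  then show ?thesis
    using True by (simp add: has_dim_ereal_iff zero_ereal_def)
next
  case False
  then have "eventually (\<lambda>i. \<not> sat (M i) (asg (b i)) p) U"
    using ultrafilter_eventually_not[OF ultra] by (simp add: up_sat_def)
  then have "eventually (\<lambda>i. realis_sizes p 0 b i = 0) U"
    by eventually_elim (simp add: realis_zero)
  then show ?thesis using False by (simp add: has_dim_MInfty_iff)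
qed

lemma has_dim_fibre_0_or_1:
  assumes "is_fm arf arr (Suc N) p" "up_tuple U M N c" "eventually (\<lambda>i. fibre (M i) p (c i) \<noteq> {}) U"
  shows "has_dim (\<lambda>i. card (fibre (M i) p (c i))) 0 \<or> has_dim (\<lambda>i. card (fibre (M i) p (c i))) 1"
proof -
  let ?r = "\<lambda>i. ln (real (card (fibre (M i) p (c i)))) / ln (real (card (univ (M i))))"
  have fibre_le: "card (fibre (M i) p (c i)) \<le> card (univ (M i))" for i
    using fin by (auto intro: card_mono simp: fibre_def)
  have pos: "eventually (\<lambda>i. 0 < card (fibre (M i) p (c i))) U"
    using assms(3) by eventually_elim (simp add: card_gt_0_iff finite_fibre[OF fin])
  then have nonempty: "up_nonempty U M p 1 c"
    unfolding up_nonempty_def by eventually_elim (metis card_realis_one card.empty less_irrefl)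
  moreover have "delta U M p 1 c = ereal (Lim U ?r)"
    using nonempty unfolding delta_def card_realis_one by simp
  ultimately have "ereal (Lim U ?r) \<in> {0, 1}"
    using hyp[of N p c] assms(1,2) by simp
  moreover have "(?r \<longlongrightarrow> Lim U ?r) U"
  proof (rule ultrafilter_tendsto_Lim[OF ultra])
    show "eventually (\<lambda>i. 0 \<le> ?r i \<and> ?r i \<le> 1) U"
      using pos infinite[of 1] by eventually_elim (simp add: fibre_le)
  qed
  ultimately show ?thesis
    using pos by (auto simp: has_dim_ereal_iff zero_ereal_def one_ereal_def)
qed

lemma has_dim_le_if_pow_le_card:
  assumes "has_dim s (ereal k)" "eventually (\<lambda>i. s i ^ j \<le> card (univ (M i))) U"
  shows "k * j \<le> 1"
proof -
  have s: "eventually (\<lambda>i. 0 < s i) U"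
    and lim: "((\<lambda>i. ln (real (s i)) / ln (real (card (univ (M i))))) \<longlongrightarrow> k) U"
    using assms(1) by (auto simp: has_dim_ereal_iff)
  have "eventually (\<lambda>i. ln (real (s i)) / ln (real (card (univ (M i)))) * j \<le> 1) U"
    using s assms(2) infinite[of 1]
  proof eventually_elim
    case (elim i)
    then have "j * ln (real (s i)) \<le> ln (real (card (univ (M i))))"
      by (simp add: ln_realpow[symmetric] flip: of_nat_power)
    then show ?case using elim by (simp add: divide_le_eq mult.commute)
  qed
  then show ?thesis
    using tendsto_upperbound[OF tendsto_mult_right[OF lim] _ U_not_bot] by blast
qed

lemma has_dim_ge_if_card_le_pow:
  assumes "has_dim s (ereal k)" "eventually (\<lambda>i. card (univ (M i)) \<le> s i ^ j) U"
  shows "1 \<le> k * j"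
proof -
  have s: "eventually (\<lambda>i. 0 < s i) U"
    and lim: "((\<lambda>i. ln (real (s i)) / ln (real (card (univ (M i))))) \<longlongrightarrow> k) U"
    using assms(1) by (auto simp: has_dim_ereal_iff)
  have "eventually (\<lambda>i. 1 \<le> ln (real (s i)) / ln (real (card (univ (M i)))) * j) U"
    using s assms(2) infinite[of 1]
  proof eventually_elim
    case (elim i)
    then have "ln (real (card (univ (M i)))) \<le> j * ln (real (s i))"
      by (simp add: ln_realpow[symmetric] flip: of_nat_power)
    then show ?case using elim by (simp add: le_divide_eq mult.commute)
  qed
  then show ?thesis
    using tendsto_lowerbound[OF tendsto_mult_right[OF lim] _ U_not_bot] by blast
qed

lemma has_dim_small_fibres:
  assumes "is_fm arf arr (Suc N) p" "up_tuple U M N c"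
    and "eventually (\<lambda>i. fibre (M i) (small_part N p) (c i) \<noteq> {}) U"
  shows "has_dim (\<lambda>i. card (fibre (M i) (small_part N p) (c i))) 0"
proof -
  have "eventually (\<lambda>i. card (fibre (M i) (small_part N p) (c i)) ^ 2 \<le> card (univ (M i))) U"
    using is_field assms(2) unfolding up_tuple_def
    by eventually_elim (use assms(1) fin in \<open>auto simp: is_fm_def lessThan_Suc_atMost intro: card_fibre_small_part\<close>)
  then have "\<not> has_dim (\<lambda>i. card (fibre (M i) (small_part N p) (c i))) 1"
    using has_dim_le_if_pow_le_card[of _ 1 2] by (force simp: one_ereal_def)
  then show ?thesis
    using has_dim_fibre_0_or_1[OF is_fm_small_part[OF assms(1)] assms(2,3)] by blast
qed

lemma has_dim_big_fibres:
  assumes "is_fm arf arr (Suc N) p" "up_tuple U M N c"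
    and "eventually (\<lambda>i. fibre (M i) (big_part N p) (c i) \<noteq> {}) U"
  shows "has_dim (\<lambda>i. card (fibre (M i) (big_part N p) (c i))) 1"
proof -
  have "eventually (\<lambda>i. card (univ (M i)) \<le> card (fibre (M i) (big_part N p) (c i)) ^ 4) U"
    using is_field assms(2,3) unfolding up_tuple_def
    by eventually_elim (use assms(1) fin in \<open>auto simp: is_fm_def lessThan_Suc_atMost intro: card_fibre_big_part\<close>)
  then have "\<not> has_dim (\<lambda>i. card (fibre (M i) (big_part N p) (c i))) 0"
    using has_dim_ge_if_card_le_pow[of _ 0 4] by (force simp: zero_ereal_def)
  then show ?thesis
    using has_dim_fibre_0_or_1[OF is_fm_big_part[OF assms(1)] assms(2,3)] by blast
qed

lemma has_dim_realis_Suc: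
  assumes p: "is_fm arf arr (Suc (n + m)) p" and b: "up_tuple U M m b"
    and proj: "has_dim (realis_sizes (ex_head (n + m) p) n b) dP"
    and fibres: "\<And>c. up_tuple U M (n + m) c \<Longrightarrow> eventually (\<lambda>i. fibre (M i) p (c i) \<noteq> {}) U \<Longrightarrow>
      has_dim (\<lambda>i. card (fibre (M i) p (c i))) (ereal d)"
  shows "has_dim (realis_sizes p (Suc n) b) (dP + ereal d)"
proof (rule has_dim_sum[OF _ proj])
  have fv: "fv p \<subseteq> {..n + m}" using p by (auto simp: is_fm_def lessThan_Suc_atMost)
  show "eventually (\<lambda>i. finite (realis (M i) (ex_head (n + m) p) n (b i)) \<and>
      (\<forall>x\<in>realis (M i) (ex_head (n + m) p) n (b i). 0 < card (fibre (M i) p (x @ b i))) \<and>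
      realis_sizes p (Suc n) b i = (\<Sum>x\<in>realis (M i) (ex_head (n + m) p) n (b i). card (fibre (M i) p (x @ b i)))) U"
    using b unfolding up_tuple_def
  proof eventually_elim
    case (elim i)
    then have len: "length (b i) = m" by simp
    have "0 < card (fibre (M i) p (x @ b i))" if "x \<in> realis (M i) (ex_head (n + m) p) n (b i)" for x
      using that realis_ex_head[OF fv len] by (auto simp: card_gt_0_iff finite_fibre[OF fin])
    then show ?case by (simp add: finite_realis[OF fin] card_realis_Suc[OF fin fv len])
  qed
  fix c assume c: "eventually (\<lambda>i. c i \<in> realis (M i) (ex_head (n + m) p) n (b i)) U"
  have "eventually (\<lambda>i. fibre (M i) p (c i @ b i) \<noteq> {}) U"
    using b c unfolding up_tuple_def by eventually_elim (simp add: realis_ex_head[OF fv])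
  then show "has_dim (\<lambda>i. card (fibre (M i) p (c i @ b i))) (ereal d)"
    using fibres up_tuple_append[OF b c] by blast
qed

lemma has_dim_realis_Suc_split:
  assumes p: "is_fm arf arr (Suc (n + m)) p" and b: "up_tuple U M m b"
    and "has_dim (realis_sizes (ex_head (n + m) (small_part (n + m) p)) n b) ds"
    and "has_dim (realis_sizes (ex_head (n + m) (big_part (n + m) p)) n b) db"
  shows "has_dim (realis_sizes p (Suc n) b) (max ds (db + 1))"
proof -
  have "has_dim (realis_sizes (small_part (n + m) p) (Suc n) b) (ds + ereal 0)"
    using is_fm_small_part[OF p] b assms(3) has_dim_small_fibres[OF p]
    by (intro has_dim_realis_Suc) (auto simp: zero_ereal_def)
  moreover have "has_dim (realis_sizes (big_part (n + m) p) (Suc n) b) (db + ereal 1)"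
    using is_fm_big_part[OF p] b assms(4) has_dim_big_fibres[OF p]
    by (intro has_dim_realis_Suc) (auto simp: one_ereal_def)
  ultimately have "has_dim (\<lambda>i. realis_sizes (small_part (n + m) p) (Suc n) b i +
      realis_sizes (big_part (n + m) p) (Suc n) b i) (max ds (db + 1))"
    using has_dim_add by (simp add: one_ereal_def)
  then show ?thesis by (simp flip: card_realis_small_big[OF fin])
qed

lemma has_dim_realis:
  "is_fm arf arr (n + m) p \<Longrightarrow> up_tuple U M m b \<Longrightarrow> \<exists>d\<in>dim_values n. has_dim (realis_sizes p n b) d"
proof (induction n arbitrary: m p b)
  case 0
  show ?case
    using has_dim_realis_zero[of p b] by (intro bexI) (auto simp: dim_values_def zero_ereal_def)
next
  case (Suc n)
  then have p: "is_fm arf arr (Suc (n + m)) p" by simp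
  obtain ds db where "ds \<in> dim_values n" "has_dim (realis_sizes (ex_head (n + m) (small_part (n + m) p)) n b) ds"
    and "db \<in> dim_values n" "has_dim (realis_sizes (ex_head (n + m) (big_part (n + m) p)) n b) db"
    using Suc.IH[OF is_fm_ex_head[OF is_fm_small_part[OF p]] Suc.prems(2)]
      Suc.IH[OF is_fm_ex_head[OF is_fm_big_part[OF p]] Suc.prems(2)] by blast
  then show ?case
    using has_dim_realis_Suc_split[OF p Suc.prems(2)] max_in_dim_values_Suc by blast
qed

lemma delta_in_dim_values: "is_fm arf arr (n + m) p \<Longrightarrow> up_tuple U M m b \<Longrightarrow> delta U M p n b \<in> dim_values n"
  using has_dim_realis delta_eqI by blast

lemma delta_Suc:
  assumes p: "is_fm arf arr (Suc (n + m)) p" and b: "up_tuple U M m b"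
  shows "delta U M p (Suc n) b =
    max (delta U M (ex_head (n + m) (small_part (n + m) p)) n b) (delta U M (ex_head (n + m) (big_part (n + m) p)) n b + 1)"
proof -
  obtain ds db where small: "has_dim (realis_sizes (ex_head (n + m) (small_part (n + m) p)) n b) ds"
    and big: "has_dim (realis_sizes (ex_head (n + m) (big_part (n + m) p)) n b) db"
    using has_dim_realis[OF is_fm_ex_head[OF is_fm_small_part[OF p]] b]
      has_dim_realis[OF is_fm_ex_head[OF is_fm_big_part[OF p]] b] by blast
  show ?thesis
    unfolding delta_eqI[OF small] delta_eqI[OF big]
    by (rule delta_eqI[OF has_dim_realis_Suc_split[OF p b small big]])
qed

lemma delta_le_definable:
  "is_fm arf arr (n + m) p \<Longrightarrow>
    \<exists>chi. is_fm arf arr m chi \<and> (\<forall>b. up_tuple U M m b \<longrightarrow> (up_sat U M chi b \<longleftrightarrow> delta U M p n b \<le> ereal r))"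
proof (induction n arbitrary: m p r)
  case 0
  have delta: "delta U M p 0 b = (if up_sat U M p b then 0 else -\<infinity>)" for b
    by (rule delta_eqI[OF has_dim_realis_zero])
  show ?case
  proof (cases "0 \<le> r")
    case True
    have "is_fm arf arr m (Eq (Fn Zero []) (Fn Zero []))" by (simp add: is_fm_def)
    then show ?thesis using True by (intro exI[of _ "Eq (Fn Zero []) (Fn Zero [])"]) (simp add: up_sat_def delta)
  next
    case False
    have "up_sat U M (Neg p) b \<longleftrightarrow> \<not> up_sat U M p b" for b
      using ultrafilter_eventually_not[OF ultra] by (simp add: up_sat_def)
    moreover have "is_fm arf arr m (Neg p)" using "0.prems" by (simp add: is_fm_def)
    ultimately show ?thesis using False by (intro exI[of _ "Neg p"]) (simp add: delta)
  qed
next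
  case (Suc n)
  then have p: "is_fm arf arr (Suc (n + m)) p" by simp
  obtain chis where chis: "is_fm arf arr m chis" "\<forall>b. up_tuple U M m b \<longrightarrow>
      (up_sat U M chis b \<longleftrightarrow> delta U M (ex_head (n + m) (small_part (n + m) p)) n b \<le> ereal r)"
    using Suc.IH[OF is_fm_ex_head[OF is_fm_small_part[OF p]]] by blast
  obtain chib where chib: "is_fm arf arr m chib" "\<forall>b. up_tuple U M m b \<longrightarrow>
      (up_sat U M chib b \<longleftrightarrow> delta U M (ex_head (n + m) (big_part (n + m) p)) n b \<le> ereal (r - 1))"
    using Suc.IH[OF is_fm_ex_head[OF is_fm_big_part[OF p]]] by blast
  have plus_one_le: "d + 1 \<le> ereal r \<longleftrightarrow> d \<le> ereal (r - 1)" for d :: ereal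
    by (cases d) auto
  have "is_fm arf arr m (Conj chis chib)" using chis(1) chib(1) by (simp add: is_fm_def)
  moreover have "up_sat U M (Conj chis chib) b \<longleftrightarrow> delta U M p (Suc n) b \<le> ereal r"
    if "up_tuple U M m b" for b
    using chis(2) chib(2) that by (simp add: up_sat_def eventually_conj_iff delta_Suc[OF p] plus_one_le)
  ultimately show ?case by blast
qed

end

theorem lemma2p13:
  fixes arf :: "'f \<Rightarrow> nat" and arr :: "'r \<Rightarrow> nat"
    and U :: "'i filter" and M :: "'i \<Rightarrow> ('a, 'f, 'r) struct"
  assumes ultra: "ultrafilter U"
    and wf: "\<And>i. wf_struct arf (M i)"
    and fin: "\<And>i. finite (univ (M i))"
    and infinite: "\<And>k::nat. eventually (\<lambda>i. card (univ (M i)) > k) U"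
    and is_field: "eventually (\<lambda>i. field (ring_reduct (M i))) U"
    and hyp: "\<And>m phi b. is_fm arf arr (1 + m) phi \<Longrightarrow> up_tuple U M m b \<Longrightarrow>
               up_nonempty U M phi 1 b \<Longrightarrow> delta U M phi 1 b \<in> {0, 1}"
  shows "delta_definable arf arr U M \<and>
         (\<forall>n m psi c. is_fm arf arr (n + m) psi \<longrightarrow> up_tuple U M m c \<longrightarrow>
            up_nonempty U M psi n c \<longrightarrow> delta U M psi n c \<in> {ereal (real k) | k. k \<le> n})"
proof -
  interpret unary_dim_0_1 arf arr U M
    using ultra fin infinite is_field hyp by unfold_locales
  have "delta_definable arf arr U M"
    unfolding delta_definable_def
  proof (intro allI impI conjI)
    fix n m phi and r1 r2 :: real
    assume "is_fm arf arr (n + m) phi" "r1 < r2"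
    then show "\<exists>chi. is_fm arf arr m chi \<and> (\<forall>b. up_tuple U M m b \<longrightarrow>
        (delta U M phi n b \<le> ereal r1 \<longrightarrow> up_sat U M chi b) \<and> (up_sat U M chi b \<longrightarrow> delta U M phi n b < ereal r2))"
      using delta_le_definable[of n m phi r1] by (fastforce intro: le_less_trans)
  next
    fix n m phi assume "is_fm arf arr (n + m) phi"
    then have "{delta U M phi n b | b. up_tuple U M m b} \<subseteq> dim_values n"
      using delta_in_dim_values by blast
    then show "finite {delta U M phi n b | b. up_tuple U M m b}"
      by (rule finite_subset) (simp add: dim_values_def)
  qed
  moreover have "delta U M psi n c \<in> {ereal (real k) | k. k \<le> n}"
    if "is_fm arf arr (n + m) psi" "up_tuple U M m c" "up_nonempty U M psi n c" for n m psi c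
    using delta_in_dim_values[OF that(1,2)] that(3) by (auto simp: dim_values_def delta_def)
  ultimately show ?thesis by blast
qed

end
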